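(* Let $\Phi$ be a random power-law $k$-SAT formula with $n$ variables, $m$ clauses, $k\ge3$, and constant $\beta>\frac{2k-3}{k-2}$. Let $\varepsilon>0$ be a constant such that $c=(k-1)-(1+\varepsilon)\frac{\beta-1}{\beta-2}>0$. If $\Delta=m/n\in o\left(n^{\varepsilon}/\log^{\varepsilon}n\right)$, then there exists $r\in\Theta\left(n\,\Delta^{-1/\varepsilon}\right)$ such that the clause-variable incidence graph $G(\Phi)$ is asymptotically almost surely an $(r,c)$-bipartite expander.
   Context: Power-law random $k$-SAT model: given $n$ variables $x_1,\dots,x_n$, $m$ clauses, an integer $k\ge 3$ and a constant $\beta>2$, assign weights $w_i=i^{-1/(\beta-1)}$. Each of the $m$ clauses is generated independently: $k$ distinct variables are drawn one after another without repetition, each draw choosing among the not-yet-drawn variables with probability proportional to their weights; each chosen variable is then negated independently with probability $1/2$. "Asymptotically almost surely" means with probability tending to $1$ as $n\to\infty$. The clause-variable incidence graph $G(\Phi)$ is the bipartite graph on the clause set $C$ and variable set $V$ with clause $c$ adjacent to variable $v$ iff $v$ occurs (positively or negatively) in $c$. For $C'\subseteq C$, $N(C')$ is the set of variables adjacent to some clause in $C'$. $G(\Phi)$ is an $(r,c)$-bipartite expander if $|N(C')|\ge(1+c)|C'|$ for every $C'\subseteq C$ with $|C'|\le r$. *)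

theory Defs
  imports "HOL-Probability.Probability" "HOL-Library.Landau_Symbols"
begin

text \<open>Variables are 1..n, variable i has weight
  i powr (-1/(beta-1)). A literal is a pair (variable, sign) where the sign True
  means the variable is negated. A clause is a list of k literals over distinct
  variables; a formula is a list of m clauses (clause j is the j-th entry).\<close>

definition pl_weight :: "real \<Rightarrow> nat \<Rightarrow> real" where
  "pl_weight \<beta> i = real i powr (-1 / (\<beta> - 1))"

definition weighted_choice :: "real \<Rightarrow> nat set \<Rightarrow> nat pmf" where
  "weighted_choice \<beta> S =
     (if finite S \<and> S \<noteq> {} \<and> sum (pl_weight \<beta>) S > 0
      then embed_pmf (\<lambda>i. if i \<in> S then pl_weight \<beta> i / sum (pl_weight \<beta>) S else 0)
      else return_pmf 0)"

fun draw_vars :: "real \<Rightarrow> nat \<Rightarrow> nat set \<Rightarrow> nat list pmf" where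
  "draw_vars \<beta> 0 S = return_pmf []"
| "draw_vars \<beta> (Suc j) S =
     bind_pmf (weighted_choice \<beta> S) (\<lambda>v.
     bind_pmf (draw_vars \<beta> j (S - {v})) (\<lambda>vs. return_pmf (v # vs)))"

fun add_signs :: "nat list \<Rightarrow> (nat \<times> bool) list pmf" where
  "add_signs [] = return_pmf []"
| "add_signs (v # vs) =
     bind_pmf (bernoulli_pmf (1/2)) (\<lambda>b.
     bind_pmf (add_signs vs) (\<lambda>ls. return_pmf ((v, b) # ls)))"

definition random_clause :: "nat \<Rightarrow> nat \<Rightarrow> real \<Rightarrow> (nat \<times> bool) list pmf" where
  "random_clause n k \<beta> = bind_pmf (draw_vars \<beta> k {1..n}) add_signs"

fun random_formula :: "nat \<Rightarrow> nat \<Rightarrow> nat \<Rightarrow> real \<Rightarrow> (nat \<times> bool) list list pmf" where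
  "random_formula n 0 k \<beta> = return_pmf []"
| "random_formula n (Suc m) k \<beta> =
     bind_pmf (random_clause n k \<beta>) (\<lambda>c.
     bind_pmf (random_formula n m k \<beta>) (\<lambda>cs. return_pmf (c # cs)))"

text \<open>Clause-variable incidence graph: clause j (j < length \<Phi>) is adjacent to the
  variables occurring in it. N(C') is the neighbourhood of a set of clauses.\<close>
definition clause_vars :: "(nat \<times> bool) list list \<Rightarrow> nat \<Rightarrow> nat set" where
  "clause_vars \<Phi> j = fst ` set (\<Phi> ! j)"

definition nbhd :: "(nat \<times> bool) list list \<Rightarrow> nat set \<Rightarrow> nat set" where
  "nbhd \<Phi> C' = (\<Union>j\<in>C'. clause_vars \<Phi> j)"

definition bipartite_expander :: "(nat \<times> bool) list list \<Rightarrow> nat \<Rightarrow> real \<Rightarrow> bool" where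
  "bipartite_expander \<Phi> r c \<longleftrightarrow>
     (\<forall>C' \<subseteq> {..<length \<Phi>}. card C' \<le> r \<longrightarrow> real (card (nbhd \<Phi> C')) \<ge> (1 + c) * real (card C'))"

end

theory Submission
  imports Defs
begin

text \<open>A union bound over sets of clauses. A set of s clauses fails to expand iff its k s
  variable draws hit at most t < (1 + c) s distinct variables, i.e. at least k s - t of the
  draws land among variables already drawn. While at least half of the variables are still
  available (n \<ge> 2 k), their total weight is at least n powr \<gamma> / 2, and any t variables carry
  weight at most t powr \<gamma> / \<gamma>, where \<gamma> = (\<beta>-2)/(\<beta>-1); so each draw lands in a fixed set
  of t variables with probability at most (2/\<gamma>) (t/n) powr \<gamma>. Summing over the m choose s
  sets of clauses, the failure probability at size s is at most (K \<Delta> (s/n) powr \<epsilon>)^s, the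
  exponent \<epsilon> coming from (1 + \<epsilon>)/\<gamma> = k - 1 - c. Taking r a small multiple of
  n \<Delta> powr (-1/\<epsilon>) makes every term at most 2^-s, and the terms with s \<le> ln n are
  O(\<Delta> (ln n / n) powr \<epsilon>) = o(1).\<close>

subsection \<open>Power-law weight sums\<close>

lemma powr_neg_le_diff_powr:
  fixes a :: real and q :: nat
  assumes a: "0 < a" "a < 1"
  shows "(1 - a) * real (Suc q) powr (-a) \<le> real (Suc q) powr (1 - a) - real q powr (1 - a)"
proof (cases "q = 0")
  case True then show ?thesis using a by simp
next
  case False
  then have qpos: "real q > 0" by simp
  have "\<exists>z::real. real q < z \<and> z < real (Suc q) \<and>
     (real (Suc q) powr (1-a) - real q powr (1-a) = (real (Suc q) - real q) * ((1-a) * z powr (1 - a - 1)))"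
  proof (rule MVT2)
    fix x assume "real q \<le> x" "x \<le> real (Suc q)"
    then have "x > 0" using qpos by simp
    then show "((\<lambda>b. b powr (1-a)) has_real_derivative (1-a) * x powr (1 - a - 1)) (at x)"
      by (rule has_real_derivative_powr)
  qed simp
  then obtain z where z: "real q < z" "z < real (Suc q)"
    "real (Suc q) powr (1-a) - real q powr (1-a) = (1-a) * z powr (- a)" by auto
  have "real (Suc q) powr (-a) \<le> z powr (-a)"
    using z qpos a by (intro powr_mono2') auto
  then show ?thesis using z a by (simp add: mult_left_mono)
qed

lemma sum_powr_neg_le:
  fixes a :: real
  assumes a: "0 < a" "a < 1"
  shows "(\<Sum>i=1..q. real i powr (-a)) \<le> real q powr (1 - a) / (1 - a)"
proof (induction q)
  case 0 then show ?case by simp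
next
  case (Suc q)
  have "(\<Sum>i=1..Suc q. real i powr (-a)) = (\<Sum>i=1..q. real i powr (-a)) + real (Suc q) powr (-a)"
    by simp
  also have "\<dots> \<le> real q powr (1 - a) / (1 - a) + real (Suc q) powr (-a)" using Suc by simp
  also have "\<dots> = (real q powr (1 - a) + (1 - a) * real (Suc q) powr (-a)) / (1 - a)"
    using a by (simp add: field_simps)
  also have "\<dots> \<le> real (Suc q) powr (1 - a) / (1 - a)"
    using powr_neg_le_diff_powr[OF a, of q] a by (intro divide_right_mono) auto
  finally show ?case .
qed

lemma sum_powr_neg_le_initial_segment:
  fixes a :: real
  assumes a: "0 < a" "a < 1"
  shows "finite T \<Longrightarrow> 0 \<notin> T \<Longrightarrow> (\<Sum>i\<in>T. real i powr (-a)) \<le> (\<Sum>i=1..card T. real i powr (-a))"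
proof (induction "card T" arbitrary: T)
  case 0 then show ?case by simp
next
  case (Suc q)
  then have ne: "T \<noteq> {}" by auto
  define M where "M = Max T"
  have MT: "M \<in> T" using Suc ne M_def by simp
  have sub: "T \<subseteq> {1..M}" using Suc M_def by (auto simp: Suc_le_eq intro: Max_ge) (metis neq0_conv)
  have "card T \<le> M" using card_mono[OF _ sub] by simp
  have "(\<Sum>i\<in>T. real i powr (-a)) = (\<Sum>i\<in>T-{M}. real i powr (-a)) + real M powr (-a)"
    using Suc MT by (simp add: sum.remove)
  also have "(\<Sum>i\<in>T-{M}. real i powr (-a)) \<le> (\<Sum>i=1..q. real i powr (-a))"
  proof -
    have "card (T - {M}) = q" using Suc(2,3) MT by simp
    then show ?thesis using Suc(1)[of "T - {M}"] Suc(3,4) by simp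
  qed
  also have "real M powr (-a) \<le> real (Suc q) powr (-a)"
    using \<open>card T \<le> M\<close> Suc(2) a by (intro powr_mono2') auto
  finally show ?case using Suc(2)[symmetric] by simp
qed

lemma sum_powr_neg_card_le:
  fixes a :: real
  assumes a: "0 < a" "a < 1" and "finite T" "0 \<notin> T" "card T \<le> t"
  shows "(\<Sum>i\<in>T. real i powr (-a)) \<le> real t powr (1 - a) / (1 - a)"
proof -
  have "(\<Sum>i\<in>T. real i powr (-a)) \<le> real (card T) powr (1 - a) / (1 - a)"
    using sum_powr_neg_le_initial_segment[OF a assms(3,4)] sum_powr_neg_le[OF a] order_trans by blast
  also have "\<dots> \<le> real t powr (1 - a) / (1 - a)"
    using assms by (intro divide_right_mono powr_mono2) auto
  finally show ?thesis .
qed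

subsection \<open>A single weighted draw\<close>

lemma pmf_weighted_choice:
  assumes "finite S" "S \<noteq> {}" "sum (pl_weight \<beta>) S > 0" "\<And>i. i \<in> S \<Longrightarrow> pl_weight \<beta> i \<ge> 0"
  shows "pmf (weighted_choice \<beta> S) i = (if i \<in> S then pl_weight \<beta> i / sum (pl_weight \<beta>) S else 0)"
proof -
  let ?f = "\<lambda>i. if i \<in> S then pl_weight \<beta> i / sum (pl_weight \<beta>) S else 0"
  have nn: "\<And>i. 0 \<le> ?f i" using assms by auto
  have "(\<integral>\<^sup>+x. ennreal (?f x) \<partial>count_space UNIV) = (\<Sum>x\<in>S. ennreal (?f x))"
    using assms by (intro nn_integral_count_space') auto
  also have "\<dots> = ennreal (\<Sum>x\<in>S. ?f x)" using assms by (intro sum_ennreal) auto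
  also have "(\<Sum>x\<in>S. ?f x) = 1" using assms by (simp add: sum_divide_distrib[symmetric])
  finally have pr: "(\<integral>\<^sup>+x. ennreal (?f x) \<partial>count_space UNIV) = 1" by simp
  show ?thesis unfolding weighted_choice_def using assms pmf_embed_pmf[OF nn pr] by simp
qed

lemma set_pmf_weighted_choice:
  assumes "finite S" "S \<noteq> {}" "0 \<notin> S"
  shows "set_pmf (weighted_choice \<beta> S) \<subseteq> S"
proof -
  have pos: "\<And>i. i \<in> S \<Longrightarrow> pl_weight \<beta> i > 0"
    using assms(3) by (auto simp: pl_weight_def intro: Nat.gr0I)
  then have "sum (pl_weight \<beta>) S > 0" using assms by (intro sum_pos) auto
  then show ?thesis
    using pmf_weighted_choice[OF assms(1,2)] pos by (auto simp: set_pmf_iff less_imp_le split: if_splits)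
qed

definition hit_bound :: "real \<Rightarrow> nat \<Rightarrow> nat \<Rightarrow> real" where
  "hit_bound \<gamma> n t = 2 / \<gamma> * (real t / real n) powr \<gamma>"

lemma hit_bound_nonneg: "\<gamma> > 0 \<Longrightarrow> hit_bound \<gamma> n t \<ge> 0"
  by (simp add: hit_bound_def)

lemma sum_pl_weight_ge:
  assumes b: "\<beta> > 1" and S: "S \<subseteq> {1..n}" "n \<le> 2 * card S"
  shows "real n powr (1 - 1/(\<beta>-1)) / 2 \<le> sum (pl_weight \<beta>) S"
proof -
  define a where "a = 1/(\<beta>-1)"
  have w: "pl_weight \<beta> i = real i powr (-a)" for i by (simp add: pl_weight_def a_def)
  have "\<And>i. i \<in> S \<Longrightarrow> real n powr (-a) \<le> pl_weight \<beta> i"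
    unfolding w a_def using S b by (intro powr_mono2') auto
  then have "real (card S) * real n powr (-a) \<le> sum (pl_weight \<beta>) S"
    using sum_mono[of S "\<lambda>_. real n powr (-a)"] by simp
  moreover have "real n powr (1 - a) = real n * real n powr (-a)"
    by (cases "n = 0") (simp_all add: powr_diff powr_minus divide_inverse)
  moreover have "real n * real n powr (-a) \<le> 2 * real (card S) * real n powr (-a)"
    using S(2) by (intro mult_right_mono) auto
  ultimately show ?thesis by (simp add: a_def)
qed

lemma prob_weighted_choice_le:
  fixes \<beta> :: real and n t :: nat
  assumes b: "\<beta> > 2" and S: "S \<subseteq> {1..n}" "S \<noteq> {}" "n \<le> 2 * card S"
    and V: "finite V" "card V \<le> t"
  shows "measure_pmf.prob (weighted_choice \<beta> S) V \<le> hit_bound (1 - 1/(\<beta>-1)) n t"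
proof -
  define a where "a = 1/(\<beta>-1)"
  have a: "0 < a" "a < 1" using b by (auto simp: a_def field_simps)
  have w: "pl_weight \<beta> i = real i powr (-a)" for i by (simp add: pl_weight_def a_def)
  have finS: "finite S" using S finite_subset by blast
  have n: "n > 0" using S by auto
  have W: "real n powr (1 - a) / 2 \<le> sum (pl_weight \<beta>) S"
    unfolding a_def using b S(1,3) by (intro sum_pl_weight_ge) simp_all
  moreover have "real n powr (1 - a) / 2 > 0" using n by simp
  ultimately have Wpos: "sum (pl_weight \<beta>) S > 0" by linarith
  have "measure_pmf.prob (weighted_choice \<beta> S) V = (\<Sum>i\<in>V. pmf (weighted_choice \<beta> S) i)"
    using V by (simp add: measure_measure_pmf_finite)
  also have "\<dots> = (\<Sum>i\<in>V \<inter> S. pl_weight \<beta> i) / sum (pl_weight \<beta>) S"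
    using pmf_weighted_choice[OF finS S(2) Wpos] V
    by (simp add: pl_weight_def sum.inter_restrict[symmetric] sum_divide_distrib)
  also have "\<dots> \<le> (real t powr (1 - a) / (1 - a)) / (real n powr (1 - a) / 2)"
  proof (rule frac_le)
    show "(\<Sum>i\<in>V \<inter> S. pl_weight \<beta> i) \<le> real t powr (1 - a) / (1 - a)"
      unfolding w using S V a
      by (intro sum_powr_neg_card_le) (auto intro: card_mono order_trans[OF card_mono[of V]])
  qed (use W n a in auto)
  also have "\<dots> = hit_bound (1 - a) n t"
    by (simp add: hit_bound_def powr_divide field_simps)
  finally show ?thesis by (simp add: a_def)
qed

subsection \<open>Few fresh variables among many draws\<close>

text \<open>few_fresh_bound x l u is the sum over j \<le> u of (l choose j) x^(l-j). If each of l draws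
  lands among the variables already seen with probability at most x, it bounds the
  probability that at most u of the draws are fresh.\<close>

fun few_fresh_bound :: "real \<Rightarrow> nat \<Rightarrow> int \<Rightarrow> real" where
  "few_fresh_bound x 0 u = (if u < 0 then 0 else 1)"
| "few_fresh_bound x (Suc l) u = x * few_fresh_bound x l u + few_fresh_bound x l (u - 1)"

lemma few_fresh_bound_neg: "u < 0 \<Longrightarrow> few_fresh_bound x l u = 0"
  by (induction l arbitrary: u) auto

lemma few_fresh_bound_nonneg: "x \<ge> 0 \<Longrightarrow> few_fresh_bound x l u \<ge> 0"
  by (induction l arbitrary: u) auto

lemma few_fresh_bound_le:
  "0 \<le> x \<Longrightarrow> x \<le> 1 \<Longrightarrow> 0 \<le> u \<Longrightarrow> few_fresh_bound x l u \<le> 2^l * x^(l - nat u)"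
proof (induction l arbitrary: u)
  case 0 then show ?case by simp
next
  case (Suc l)
  have step: "x * x^(l - nat u) \<le> x^(Suc l - nat u)"
  proof (cases "nat u \<le> l")
    case True then show ?thesis by (simp add: Suc_diff_le)
  next
    case False then show ?thesis using Suc by simp
  qed
  have "x * few_fresh_bound x l u \<le> x * (2^l * x^(l - nat u))"
    using Suc by (intro mult_left_mono) auto
  also have "\<dots> \<le> 2^l * x^(Suc l - nat u)" using step by (simp add: mult.left_commute)
  finally have fresh: "x * few_fresh_bound x l u \<le> 2^l * x^(Suc l - nat u)" .
  have stale: "few_fresh_bound x l (u - 1) \<le> 2^l * x^(Suc l - nat u)"
  proof (cases "u = 0")
    case True then show ?thesis using few_fresh_bound_neg[of "u-1"] Suc by simp
  next
    case False
    then have "few_fresh_bound x l (u-1) \<le> 2^l * x^(l - nat (u-1))" using Suc by auto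
    moreover have "l - nat (u-1) = Suc l - nat u" using False Suc by (simp add: nat_diff_distrib')
    ultimately show ?thesis by simp
  qed
  show ?case using fresh stale by simp
qed

lemma nn_integral_few_fresh_step:
  fixes M :: "nat pmf" and x :: real and t :: int
  assumes x0: "x \<ge> 0" and V: "finite V"
    and hit: "int (card V) \<le> t \<Longrightarrow> measure_pmf.prob M V \<le> x"
  shows "(\<integral>\<^sup>+v. ennreal (few_fresh_bound x l (t - int (card (insert v V)))) \<partial>M)
    \<le> ennreal (few_fresh_bound x (Suc l) (t - int (card V)))"
proof -
  let ?F = "few_fresh_bound x l"
  define u where "u = t - int (card V)"
  have "(\<integral>\<^sup>+v. ennreal (?F (t - int (card (insert v V)))) \<partial>M)
      \<le> (\<integral>\<^sup>+v. ennreal (?F u) * indicator V v + ennreal (?F (u - 1)) \<partial>M)"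
    by (rule nn_integral_mono)
      (use V in \<open>auto simp: u_def insert_absorb algebra_simps split: split_indicator\<close>)
  also have "\<dots> = ennreal (?F u) * emeasure M V + ennreal (?F (u - 1))"
    by (simp add: nn_integral_add nn_integral_cmult_indicator measure_pmf.emeasure_space_1)
  also have "\<dots> \<le> ennreal (x * ?F u) + ennreal (?F (u - 1))"
  proof (cases "u < 0")
    case True then show ?thesis by (simp add: few_fresh_bound_neg)
  next
    case False
    then have "emeasure M V \<le> ennreal x"
      using hit unfolding measure_pmf.emeasure_eq_measure u_def by (intro ennreal_leI) simp
    then have "ennreal (?F u) * emeasure M V \<le> ennreal (?F u) * ennreal x"
      by (intro mult_left_mono) auto
    also have "\<dots> = ennreal (x * ?F u)"
      using x0 few_fresh_bound_nonneg[OF x0] by (simp add: ennreal_mult[symmetric] mult.commute)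
    finally show ?thesis by (intro add_right_mono)
  qed
  also have "\<dots> = ennreal (few_fresh_bound x (Suc l) u)"
    using x0 few_fresh_bound_nonneg[OF x0] by (simp add: ennreal_plus[symmetric] del: ennreal_plus)
  finally show ?thesis by (simp add: u_def)
qed

lemma nn_integral_draw_vars_few_fresh_le:
  fixes x :: real and t :: int
  assumes x0: "x \<ge> 0" and kn: "k \<le> n"
    and hit: "\<And>S V. S \<subseteq> {1..n} \<Longrightarrow> n + 1 \<le> card S + k \<Longrightarrow> finite V \<Longrightarrow> int (card V) \<le> t
              \<Longrightarrow> measure_pmf.prob (weighted_choice \<beta> S) V \<le> x"
  shows "S \<subseteq> {1..n} \<Longrightarrow> n + j \<le> card S + k \<Longrightarrow> finite V \<Longrightarrow>
    (\<integral>\<^sup>+vs. ennreal (few_fresh_bound x L (t - int (card (V \<union> set vs)))) \<partial>draw_vars \<beta> j S)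
      \<le> ennreal (few_fresh_bound x (L + j) (t - int (card V)))"
proof (induction j arbitrary: S V)
  case 0 then show ?case by simp
next
  case (Suc j)
  let ?M = "weighted_choice \<beta> S"
  have finS: "finite S" using Suc.prems(1) finite_subset by blast
  have "(\<integral>\<^sup>+vs. ennreal (few_fresh_bound x L (t - int (card (V \<union> set vs)))) \<partial>draw_vars \<beta> (Suc j) S)
      = (\<integral>\<^sup>+v. (\<integral>\<^sup>+vs. ennreal (few_fresh_bound x L (t - int (card (insert v V \<union> set vs))))
            \<partial>draw_vars \<beta> j (S - {v})) \<partial>?M)"
    by (simp add: nn_integral_return)
  also have "\<dots> \<le> (\<integral>\<^sup>+v. ennreal (few_fresh_bound x (L + j) (t - int (card (insert v V)))) \<partial>?M)"
  proof (rule nn_integral_mono_AE, rule AE_pmfI)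
    fix v assume v: "v \<in> set_pmf ?M"
    have "S \<noteq> {}" using Suc.prems(2) kn by auto
    then have vS: "v \<in> S"
      using set_pmf_weighted_choice[OF finS] Suc.prems(1) v by fastforce
    then have "n + j \<le> card (S - {v}) + k" using Suc.prems(2) finS by (simp add: card_Diff_singleton)
    then show "(\<integral>\<^sup>+vs. ennreal (few_fresh_bound x L (t - int (card (insert v V \<union> set vs))))
          \<partial>draw_vars \<beta> j (S - {v})) \<le> ennreal (few_fresh_bound x (L + j) (t - int (card (insert v V))))"
      using Suc.IH[of "S - {v}" "insert v V"] Suc.prems(1,3) by auto
  qed
  also have "\<dots> \<le> ennreal (few_fresh_bound x (L + Suc j) (t - int (card V)))"
    using nn_integral_few_fresh_step[OF x0 Suc.prems(3) hit[OF Suc.prems(1) _ Suc.prems(3)]] Suc.prems(2)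
    by simp
  finally show ?case .
qed

lemma add_signs_fst: "c \<in> set_pmf (add_signs vs) \<Longrightarrow> map fst c = vs"
  by (induction vs arbitrary: c) auto

lemma nn_integral_random_clause_vars:
  "(\<integral>\<^sup>+c. g (fst ` set c) \<partial>random_clause n k \<beta>) = (\<integral>\<^sup>+vs. g (set vs) \<partial>draw_vars \<beta> k {1..n})"
proof -
  have "(\<integral>\<^sup>+c. g (fst ` set c) \<partial>add_signs vs) = g (set vs)" for vs
  proof -
    have "(\<integral>\<^sup>+c. g (fst ` set c) \<partial>add_signs vs) = (\<integral>\<^sup>+c. g (set vs) \<partial>add_signs vs)"
      by (rule nn_integral_cong_AE, rule AE_pmfI) (metis add_signs_fst set_map)
    then show ?thesis by (simp add: measure_pmf.emeasure_space_1)
  qed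
  then show ?thesis by (simp add: random_clause_def)
qed

lemma nbhd_Cons:
  "nbhd (c # cs) J = (if 0 \<in> J then fst ` set c else {}) \<union> nbhd cs {j. Suc j \<in> J}"
proof -
  have "(\<Union>j\<in>J. A j) = (if 0\<in>J then A 0 else {}) \<union> (\<Union>i\<in>{i. Suc i \<in> J}. A (Suc i))"
    for A :: "nat \<Rightarrow> nat set"
    by (auto split: if_splits) (metis not0_implies_Suc)+
  then show ?thesis unfolding nbhd_def clause_vars_def by simp
qed

lemma card_Suc_preimage: "finite J \<Longrightarrow> card {j. Suc j \<in> J} = card (J - {0})"
proof -
  have "Suc ` {j. Suc j \<in> J} = J - {0}" by (auto simp: image_iff) (metis not0_implies_Suc)
  then show "card {j. Suc j \<in> J} = card (J - {0})" by (metis card_image inj_Suc)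
qed

lemma nn_integral_random_formula_few_fresh_le:
  fixes x :: real and t :: int
  assumes x0: "x \<ge> 0" and kn: "k \<le> n"
    and hit: "\<And>S V. S \<subseteq> {1..n} \<Longrightarrow> n + 1 \<le> card S + k \<Longrightarrow> finite V \<Longrightarrow> int (card V) \<le> t
              \<Longrightarrow> measure_pmf.prob (weighted_choice \<beta> S) V \<le> x"
  shows "J \<subseteq> {..<m} \<Longrightarrow> finite V \<Longrightarrow>
    (\<integral>\<^sup>+\<Phi>. ennreal (few_fresh_bound x L (t - int (card (V \<union> nbhd \<Phi> J)))) \<partial>random_formula n m k \<beta>)
      \<le> ennreal (few_fresh_bound x (L + k * card J) (t - int (card V)))"
proof (induction m arbitrary: J V)
  case 0 then show ?case by (simp add: nbhd_def)
next
  case (Suc m)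
  define J' where "J' = {j. Suc j \<in> J}"
  have J'sub: "J' \<subseteq> {..<m}" using Suc.prems(1) by (auto simp: J'_def)
  have finJ: "finite J" using Suc.prems(1) finite_subset by blast
  have cJ: "card J = (if 0 \<in> J then Suc (card J') else card J')"
    using card_Suc_preimage[OF finJ] finJ
    by (simp add: J'_def card_Diff_singleton) (metis card_0_eq empty_iff Suc_pred neq0_conv)
  define W where "W = (\<lambda>c::(nat \<times> bool) list. V \<union> (if 0 \<in> J then fst ` set c else {}))"
  let ?F = "few_fresh_bound x (L + k * card J')"
  have "(\<integral>\<^sup>+\<Phi>. ennreal (few_fresh_bound x L (t - int (card (V \<union> nbhd \<Phi> J)))) \<partial>random_formula n (Suc m) k \<beta>)
     = (\<integral>\<^sup>+c. (\<integral>\<^sup>+cs. ennreal (few_fresh_bound x L (t - int (card (W c \<union> nbhd cs J'))))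
          \<partial>random_formula n m k \<beta>) \<partial>random_clause n k \<beta>)"
    by (simp add: nn_integral_return nbhd_Cons W_def J'_def Un_assoc)
  also have "\<dots> \<le> (\<integral>\<^sup>+c. ennreal (?F (t - int (card (W c)))) \<partial>random_clause n k \<beta>)"
    by (rule nn_integral_mono) (use Suc.IH J'sub Suc.prems(2) in \<open>auto simp: W_def\<close>)
  also have "\<dots> \<le> ennreal (few_fresh_bound x (L + k * card J) (t - int (card V)))"
  proof (cases "0 \<in> J")
    case False
    then show ?thesis using cJ by (simp add: W_def measure_pmf.emeasure_space_1)
  next
    case True
    have "(\<integral>\<^sup>+c. ennreal (?F (t - int (card (W c)))) \<partial>random_clause n k \<beta>)
       = (\<integral>\<^sup>+vs. ennreal (?F (t - int (card (V \<union> set vs)))) \<partial>draw_vars \<beta> k {1..n})"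
      using True nn_integral_random_clause_vars[where g="\<lambda>A. ennreal (?F (t - int (card (V \<union> A))))"]
      by (simp add: W_def)
    also have "\<dots> \<le> ennreal (few_fresh_bound x (L + k * card J' + k) (t - int (card V)))"
      by (rule nn_integral_draw_vars_few_fresh_le[OF x0 kn hit]) (use Suc.prems(2) in auto)
    also have "L + k * card J' + k = L + k * card J" using True cJ by simp
    finally show ?thesis .
  qed
  finally show ?case .
qed

lemma prob_card_nbhd_le:
  fixes t :: nat
  assumes b: "\<beta> > 2" and nk: "2 * k \<le> n"
    and hit_le_one: "hit_bound (1 - 1/(\<beta>-1)) n t \<le> 1"
    and J: "J \<subseteq> {..<m}"
  shows "measure_pmf.prob (random_formula n m k \<beta>) {\<Phi>. card (nbhd \<Phi> J) \<le> t}
     \<le> 2^(k * card J) * (hit_bound (1 - 1/(\<beta>-1)) n t)^(k * card J - t)"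
proof -
  let ?x = "hit_bound (1 - 1/(\<beta>-1)) n t"
  let ?M = "random_formula n m k \<beta>"
  have x0: "?x \<ge> 0" using b by (intro hit_bound_nonneg) (simp add: field_simps)
  have hit: "measure_pmf.prob (weighted_choice \<beta> S) V \<le> ?x"
    if S: "S \<subseteq> {1..n}" "n + 1 \<le> card S + k" and V: "finite V" "int (card V) \<le> int t" for S V
    using prob_weighted_choice_le[OF b S(1) _ _ V(1)] S nk V by fastforce
  have "emeasure ?M {\<Phi>. card (nbhd \<Phi> J) \<le> t} = (\<integral>\<^sup>+\<Phi>. indicator {\<Phi>. card (nbhd \<Phi> J) \<le> t} \<Phi> \<partial>?M)"
    by simp
  also have "\<dots> \<le> (\<integral>\<^sup>+\<Phi>. ennreal (few_fresh_bound ?x 0 (int t - int (card ({} \<union> nbhd \<Phi> J)))) \<partial>?M)"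
    by (rule nn_integral_mono) (auto split: split_indicator)
  also have "\<dots> \<le> ennreal (few_fresh_bound ?x (0 + k * card J) (int t - int (card ({}::nat set))))"
    by (rule nn_integral_random_formula_few_fresh_le[OF x0 _ hit J]) (use nk in auto)
  also have "\<dots> \<le> ennreal (2^(k * card J) * ?x^(k * card J - t))"
    using few_fresh_bound_le[OF x0 hit_le_one, of "int t" "k * card J"] by (intro ennreal_leI) simp
  finally show ?thesis using x0 by (simp add: measure_pmf.emeasure_eq_measure ennreal_le_iff)
qed

subsection \<open>The union bound\<close>

definition max_below :: "real \<Rightarrow> nat" where
  "max_below x = nat (\<lceil>x\<rceil> - 1)"

lemma max_below_less: "0 < x \<Longrightarrow> real (max_below x) < x"
proof -
  assume "0 < x"
  then have "\<lceil>x\<rceil> \<ge> 1" by (simp add: ceiling_le_iff[symmetric])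
  then have "real (max_below x) = of_int \<lceil>x\<rceil> - 1" unfolding max_below_def by simp
  then show ?thesis by (metis ceiling_correct)
qed

lemma le_max_below: "real N < x \<Longrightarrow> N \<le> max_below x"
proof -
  assume "real N < x"
  then have "int N < \<lceil>x\<rceil>" by (simp add: less_ceiling_iff)
  then show ?thesis unfolding max_below_def by linarith
qed

lemma length_random_formula: "\<Phi> \<in> set_pmf (random_formula n m k \<beta>) \<Longrightarrow> length \<Phi> = m"
  by (induction m arbitrary: \<Phi>) auto

lemma prob_not_expander_le_sum:
  assumes b: "\<beta> > 2" and nk: "2 * k \<le> n" and c: "c > 0"
    and hit_le_one: "\<And>s. 1 \<le> s \<Longrightarrow> s \<le> min r m \<Longrightarrow> hit_bound (1 - 1/(\<beta>-1)) n (max_below ((1 + c) * real s)) \<le> 1"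
  shows "measure_pmf.prob (random_formula n m k \<beta>) {\<Phi>. \<not> bipartite_expander \<Phi> r c}
     \<le> (\<Sum>s=1..min r m. real (m choose s) *
           (2^(k * s) * hit_bound (1 - 1/(\<beta>-1)) n (max_below ((1 + c) * s))^(k * s - max_below ((1 + c) * s))))"
proof -
  let ?M = "random_formula n m k \<beta>"
  let ?t = "\<lambda>s::nat. max_below ((1 + c) * s)"
  define A where "A = (\<lambda>J. {\<Phi>. card (nbhd \<Phi> J) \<le> ?t (card J)})"
  define I where "I = (\<lambda>s. {J. J \<subseteq> {..<m} \<and> card J = s})"
  have finI: "finite (I s)" for s unfolding I_def by (rule finite_subset[of _ "Pow {..<m}"]) auto
  have cardI: "card (I s) = m choose s" for s unfolding I_def using n_subsets[of "{..<m}" s] by simp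
  have sub: "{\<Phi>. \<not> bipartite_expander \<Phi> r c} \<inter> set_pmf ?M \<subseteq> (\<Union>s\<in>{1..min r m}. \<Union>J\<in>I s. A J)"
  proof
    fix \<Phi> assume "\<Phi> \<in> {\<Phi>. \<not> bipartite_expander \<Phi> r c} \<inter> set_pmf ?M"
    then obtain C' where C': "C' \<subseteq> {..<m}" "card C' \<le> r"
      "real (card (nbhd \<Phi> C')) < (1 + c) * real (card C')"
      using length_random_formula unfolding bipartite_expander_def by (auto simp: not_le)
    have "card C' \<noteq> 0" using C'(3) by (intro notI) simp
    moreover have "card C' \<le> m" using C'(1) by (metis card_lessThan card_mono finite_lessThan)
    ultimately have "card C' \<in> {1..min r m}" using C'(2) by auto
    moreover have "card (nbhd \<Phi> C') \<le> ?t (card C')" using C'(3) by (rule le_max_below)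
    ultimately show "\<Phi> \<in> (\<Union>s\<in>{1..min r m}. \<Union>J\<in>I s. A J)"
      using C'(1) unfolding A_def I_def by blast
  qed
  have "measure_pmf.prob ?M {\<Phi>. \<not> bipartite_expander \<Phi> r c}
      = measure_pmf.prob ?M ({\<Phi>. \<not> bipartite_expander \<Phi> r c} \<inter> set_pmf ?M)"
    by (simp add: measure_Int_set_pmf)
  also have "\<dots> \<le> measure_pmf.prob ?M (\<Union>s\<in>{1..min r m}. \<Union>J\<in>I s. A J)"
    using sub by (intro measure_pmf.finite_measure_mono) auto
  also have "\<dots> \<le> (\<Sum>s\<in>{1..min r m}. (\<Sum>J\<in>I s. measure_pmf.prob ?M (A J)))"
    by (intro order_trans[OF measure_pmf.finite_measure_subadditive_finite] sum_mono
          measure_pmf.finite_measure_subadditive_finite finI) auto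
  also have "\<dots> \<le> (\<Sum>s\<in>{1..min r m}. (\<Sum>J\<in>I s.
        2^(k * s) * hit_bound (1 - 1/(\<beta>-1)) n (?t s)^(k * s - ?t s)))"
    using prob_card_nbhd_le[OF b nk hit_le_one] by (intro sum_mono) (auto simp: A_def I_def)
  finally show ?thesis by (simp add: cardI)
qed

subsection \<open>Bounding the terms of the union bound\<close>

lemma binomial_le_exp_pow: "real (m choose s) \<le> (exp 1 * real m / real s) ^ s"
proof (cases "s = 0")
  case True then show ?thesis by simp
next
  case False
  have "(\<Sum>n\<in>{s}. real s ^ n /\<^sub>R fact n) \<le> (\<Sum>n. real s ^ n /\<^sub>R fact n)"
    using exp_converges[of "real s"] by (intro sum_le_suminf) (auto dest: sums_summable)
  then have "real s ^ s / fact s \<le> exp (real s)" by (simp add: exp_def divide_inverse mult.commute)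
  also have "exp (real s) = exp 1 ^ s" using exp_of_nat_mult[of s 1] by simp
  finally have ss: "real s ^ s / fact s \<le> exp 1 ^ s" .
  have "real (m choose s) * fact s \<le> real m ^ s"
    using binomial_fact_pow[of m s] by (metis of_nat_fact of_nat_le_iff of_nat_mult of_nat_power)
  then have "real (m choose s) \<le> (real m / real s) ^ s * (real s ^ s / fact s)"
    using False by (simp add: power_divide field_simps)
  also have "\<dots> \<le> (real m / real s) ^ s * exp 1 ^ s" using ss by (intro mult_left_mono) auto
  finally show ?thesis by (simp add: power_mult_distrib[symmetric] mult.commute)
qed

definition expansion_const :: "real \<Rightarrow> nat \<Rightarrow> real \<Rightarrow> real" where
  "expansion_const \<gamma> k \<epsilon> = exp 1 * 2^k * ((2/\<gamma>) powr (1/\<gamma>) * real k) powr (1 + \<epsilon>)"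

lemma expansion_const_pos: "\<gamma> > 0 \<Longrightarrow> k > 0 \<Longrightarrow> expansion_const \<gamma> k \<epsilon> > 0"
  by (simp add: expansion_const_def)

lemma hit_bound_le_powr:
  assumes "\<gamma> > 0" "n > 0" "t \<le> k * s"
  shows "hit_bound \<gamma> n t \<le> ((2/\<gamma>) powr (1/\<gamma>) * real k * (real s / real n)) powr \<gamma>"
proof -
  have "hit_bound \<gamma> n t \<le> 2/\<gamma> * (real k * (real s / real n)) powr \<gamma>"
    unfolding hit_bound_def using assms
    by (intro mult_left_mono powr_mono2) (auto simp flip: of_nat_mult intro: divide_right_mono)
  also have "2/\<gamma> = ((2/\<gamma>) powr (1/\<gamma>)) powr \<gamma>" using assms by (simp add: powr_powr)
  also have "((2/\<gamma>) powr (1/\<gamma>)) powr \<gamma> * (real k * (real s / real n)) powr \<gamma>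
      = ((2/\<gamma>) powr (1/\<gamma>) * real k * (real s / real n)) powr \<gamma>"
    by (simp add: powr_mult[symmetric] mult.assoc del: times_divide_eq_right)
  finally show ?thesis .
qed

lemma expansion_const_eq:
  assumes "s > 0" "n > 0"
  shows "exp 1 * real m / real s * 2^k * ((2/\<gamma>) powr (1/\<gamma>) * real k * (real s / real n)) powr (1 + \<epsilon>)
    = expansion_const \<gamma> k \<epsilon> * (real m / real n) * (real s / real n) powr \<epsilon>"
proof -
  define A where "A = ((2/\<gamma>) powr (1/\<gamma>) * real k) powr (1 + \<epsilon>)"
  define B where "B = (real s / real n) powr \<epsilon>"
  have "((2/\<gamma>) powr (1/\<gamma>) * real k * (real s / real n)) powr (1 + \<epsilon>)
      = A * (real s / real n) powr (1 + \<epsilon>)"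
    unfolding A_def by (rule powr_mult; simp)
  also have "(real s / real n) powr (1 + \<epsilon>) = (real s / real n) * B"
    unfolding B_def using assms by (simp add: powr_add)
  finally have "((2/\<gamma>) powr (1/\<gamma>) * real k * (real s / real n)) powr (1 + \<epsilon>)
      = A * (real s / real n) * B" by simp
  then show ?thesis
    unfolding expansion_const_def A_def[symmetric] B_def[symmetric] using assms by (simp add: field_simps)
qed

lemma pow_le_powr_of_le_powr:
  fixes x z \<gamma> a :: real
  assumes x: "0 \<le> x" "x \<le> z powr \<gamma>" and z: "0 < z" "z \<le> 1" and "0 < \<gamma>" "a / \<gamma> \<le> real d"
  shows "x ^ d \<le> z powr a"
proof -
  have "x ^ d \<le> (z powr \<gamma>) powr real d" using x z by (simp add: powr_realpow power_mono)
  also have "\<dots> \<le> (z powr \<gamma>) powr (a / \<gamma>)" using assms by (intro powr_mono') (auto intro: powr_le1)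
  also have "\<dots> = z powr a" using assms by (simp add: powr_powr)
  finally show ?thesis .
qed

lemma max_below_deficiency:
  fixes \<gamma> \<epsilon> c :: real and k s :: nat
  assumes g: "0 < \<gamma>" and e: "0 < \<epsilon>" and c: "0 < c" and rel: "(1 + \<epsilon>)/\<gamma> = real k - 1 - c"
    and s: "1 \<le> s"
  defines "t \<equiv> max_below ((1 + c) * real s)"
  shows "t \<le> k * s" and "(1 + \<epsilon>) * real s / \<gamma> \<le> real (k * s - t)"
proof -
  have t: "real t < (1 + c) * real s" unfolding t_def using c s by (intro max_below_less) auto
  have "(1 + \<epsilon>) / \<gamma> > 0" using e g by simp
  then have "(1 + c) * real s \<le> real k * real s" using rel by (intro mult_right_mono) auto
  then show tle: "t \<le> k * s" using t by (simp flip: of_nat_mult)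
  have "(1 + \<epsilon>) * real s / \<gamma> = ((1 + \<epsilon>) / \<gamma>) * real s" by simp
  also have "\<dots> = (real k - 1 - c) * real s" using rel by simp
  also have "\<dots> \<le> real k * real s - real t" using t by (simp add: algebra_simps)
  finally show "(1 + \<epsilon>) * real s / \<gamma> \<le> real (k * s - t)" using tle by (simp add: of_nat_diff)
qed

lemma union_term_le:
  fixes k m n s :: nat and \<gamma> \<epsilon> c :: real
  assumes g: "0 < \<gamma>" "\<gamma> < 1" and e: "\<epsilon> > 0" and c: "c > 0"
    and rel: "(1 + \<epsilon>)/\<gamma> = real k - 1 - c"
    and n: "n > 0" and s: "1 \<le> s" "s \<le> m"
    and q: "expansion_const \<gamma> k \<epsilon> * (real m / real n) * (real s / real n) powr \<epsilon> \<le> 1/2"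
  defines "t \<equiv> max_below ((1 + c) * real s)"
  shows "hit_bound \<gamma> n t \<le> 1"
    and "real (m choose s) * (2^(k * s) * hit_bound \<gamma> n t ^ (k * s - t))
          \<le> (expansion_const \<gamma> k \<epsilon> * (real m / real n) * (real s / real n) powr \<epsilon>) ^ s"
proof -
  define q where "q = expansion_const \<gamma> k \<epsilon> * (real m / real n) * (real s / real n) powr \<epsilon>"
  define z where "z = (2/\<gamma>) powr (1/\<gamma>) * real k * (real s / real n)"
  have tle: "t \<le> k * s" and expo: "(1 + \<epsilon>) * real s / \<gamma> \<le> real (k * s - t)"
    unfolding t_def using max_below_deficiency[OF g(1) e c rel s(1)] by auto
  have "(1 + \<epsilon>) / \<gamma> > 0" using e g by simp
  then have "real k > 0" using rel c by linarith
  then have k: "k > 0" by simp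
  have zpos: "z > 0" using k s n g by (simp add: z_def)
  have hit: "hit_bound \<gamma> n t \<le> z powr \<gamma>" unfolding z_def using g(1) n tle by (rule hit_bound_le_powr)
  have hit0: "hit_bound \<gamma> n t \<ge> 0" using g(1) by (rule hit_bound_nonneg)
  have zq: "exp 1 * real m / real s * 2^k * z powr (1 + \<epsilon>) = q"
    unfolding z_def q_def using s n by (intro expansion_const_eq) auto
  have "1 * 1 * 1 \<le> exp 1 * (real m / real s) * 2^k" using s by (intro mult_mono) auto
  then have "1 * z powr (1 + \<epsilon>) \<le> exp 1 * real m / real s * 2^k * z powr (1 + \<epsilon>)"
    by (intro mult_right_mono) simp_all
  then have "z powr (1 + \<epsilon>) \<le> 1/2" using zq q unfolding q_def by linarith
  then have z1: "z \<le> 1" using gr_one_powr[of z "1 + \<epsilon>"] e by fastforce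
  have "z powr \<gamma> \<le> 1" using z1 zpos g by (intro powr_le1) auto
  then show "hit_bound \<gamma> n t \<le> 1" using hit by linarith
  have "hit_bound \<gamma> n t ^ (k * s - t) \<le> z powr ((1 + \<epsilon>) * real s)"
    using hit0 hit zpos z1 g(1) expo by (rule pow_le_powr_of_le_powr)
  also have "\<dots> = (z powr (1 + \<epsilon>)) ^ s" using zpos by (simp add: powr_powr[symmetric] powr_realpow)
  finally have hit_pow: "hit_bound \<gamma> n t ^ (k * s - t) \<le> (z powr (1 + \<epsilon>)) ^ s" .
  have "real (m choose s) * (2^(k * s) * hit_bound \<gamma> n t ^ (k * s - t))
      \<le> (exp 1 * real m / real s) ^ s * (2^(k * s) * (z powr (1 + \<epsilon>)) ^ s)"
    using binomial_le_exp_pow[of m s] hit_pow hit0 by (intro mult_mono mult_left_mono) auto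
  also have "\<dots> = (exp 1 * real m / real s * 2^k * z powr (1 + \<epsilon>)) ^ s"
    by (simp only: power_mult power_mult_distrib mult_ac)
  also have "\<dots> = q ^ s" using zq by simp
  finally show "real (m choose s) * (2^(k * s) * hit_bound \<gamma> n t ^ (k * s - t)) \<le> q ^ s" .
qed

lemma sum_power_self_le:
  fixes R :: nat and q :: "nat \<Rightarrow> real" and L \<eta> :: real
  assumes q0: "\<And>s. 0 \<le> q s" and q_half: "\<And>s. 1 \<le> s \<Longrightarrow> q s \<le> 1/2"
    and q_small: "\<And>s. 1 \<le> s \<Longrightarrow> real s \<le> L \<Longrightarrow> q s \<le> \<eta>" and \<eta>: "\<eta> \<ge> 0"
  shows "(\<Sum>s=1..R. q s ^ s) \<le> 4 * (\<eta> + (3/4) powr L)"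
proof -
  have term_le: "q s ^ s \<le> (\<eta> + (3/4) powr L) * (3/4)^(s-1)" if s: "1 \<le> s" for s
  proof (cases "real s \<le> L")
    case True
    have "q s ^ s = q s * q s ^ (s - 1)" using s by (simp add: power_eq_if)
    also have "\<dots> \<le> \<eta> * (3/4) ^ (s - 1)"
      using q_small[OF s True] q_half[OF s] q0 \<eta> by (intro mult_mono power_mono) auto
    also have "\<dots> \<le> (\<eta> + (3/4) powr L) * (3/4)^(s-1)"
      by (intro mult_right_mono) auto
    finally show ?thesis .
  next
    case False
    have "q s ^ s \<le> (9/16) ^ s" using q_half[OF s] q0 by (intro power_mono) auto
    also have "(9/16::real) ^ s = (3/4)^s * (3/4)^s" by (simp add: power_mult_distrib[symmetric])
    also have "\<dots> \<le> (3/4) powr L * (3/4)^(s-1)"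
    proof (rule mult_mono)
      show "(3/4::real)^s \<le> (3/4) powr L"
        using False by (simp add: powr_realpow[symmetric] powr_mono')
      show "(3/4::real) ^ s \<le> (3/4)^(s-1)" by (intro power_decreasing) auto
    qed auto
    also have "\<dots> \<le> (\<eta> + (3/4) powr L) * (3/4)^(s-1)"
      using \<eta> by (intro mult_right_mono) auto
    finally show ?thesis .
  qed
  have "(\<Sum>s=1..R. (3/4::real)^(s-1)) = (\<Sum>i<R. (3/4::real)^i)"
    by (induction R) simp_all
  also have "\<dots> \<le> 4" by (simp add: geometric_sum)
  finally have geom: "(\<Sum>s=1..R. (3/4::real)^(s-1)) \<le> 4" .
  have "(\<Sum>s=1..R. q s ^ s) \<le> (\<Sum>s=1..R. (\<eta> + (3/4) powr L) * (3/4)^(s-1))"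
    by (intro sum_mono term_le) auto
  also have "\<dots> = (\<eta> + (3/4) powr L) * (\<Sum>s=1..R. (3/4::real)^(s-1))"
    by (simp add: sum_distrib_left)
  also have "\<dots> \<le> (\<eta> + (3/4) powr L) * 4"
    using geom \<eta> by (intro mult_left_mono) auto
  finally show ?thesis by (simp add: mult.commute)
qed

lemma prob_not_expander_le:
  fixes n m r k :: nat and \<beta> \<epsilon> c K :: real
  assumes b: "\<beta> > 2" and e: "\<epsilon> > 0" and c: "c > 0" and nk: "2 * k \<le> n"
    and rel: "(1 + \<epsilon>) / (1 - 1/(\<beta>-1)) = real k - 1 - c"
    and K: "K = expansion_const (1 - 1/(\<beta>-1)) k \<epsilon>"
    and small: "\<And>s. 1 \<le> s \<Longrightarrow> s \<le> min r m \<Longrightarrow> K * (real m / real n) * (real s / real n) powr \<epsilon> \<le> 1/2"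
  shows "measure_pmf.prob (random_formula n m k \<beta>) {\<Phi>. \<not> bipartite_expander \<Phi> r c}
    \<le> 4 * (K * (real m / real n) * (ln (real n) / real n) powr \<epsilon> + (3/4) powr ln (real n))"
proof -
  let ?M = "random_formula n m k \<beta>"
  let ?t = "\<lambda>s::nat. max_below ((1 + c) * s)"
  let ?\<gamma> = "1 - 1/(\<beta>-1)"
  let ?q = "\<lambda>s::nat. min (1/2) (K * (real m / real n) * (real s / real n) powr \<epsilon>)"
  have g: "0 < ?\<gamma>" "?\<gamma> < 1" using b by (auto simp: field_simps)
  have "(1 + \<epsilon>) / ?\<gamma> > 0" using e g by simp
  then have "1 + c < real k" using rel by linarith
  then have n: "n > 0" using nk c by linarith
  have K0: "K \<ge> 0" using K g expansion_const_pos[of ?\<gamma> k \<epsilon>] \<open>1 + c < real k\<close> c by simp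
  have hit_le: "hit_bound ?\<gamma> n (?t s) \<le> 1"
    and term_le: "real (m choose s) * (2^(k * s) * hit_bound ?\<gamma> n (?t s)^(k * s - ?t s)) \<le> ?q s ^ s"
    if s: "1 \<le> s" "s \<le> min r m" for s
  proof -
    have half: "K * (real m / real n) * (real s / real n) powr \<epsilon> \<le> 1/2" using small[OF s] .
    then have "?q s = K * (real m / real n) * (real s / real n) powr \<epsilon>" by simp
    then show "hit_bound ?\<gamma> n (?t s) \<le> 1"
      and "real (m choose s) * (2^(k * s) * hit_bound ?\<gamma> n (?t s)^(k * s - ?t s)) \<le> ?q s ^ s"
      using union_term_le[OF g e c rel n s(1) _ half[unfolded K]] s K by simp_all
  qed
  have "measure_pmf.prob ?M {\<Phi>. \<not> bipartite_expander \<Phi> r c}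
      \<le> (\<Sum>s=1..min r m. real (m choose s) * (2^(k * s) * hit_bound ?\<gamma> n (?t s)^(k * s - ?t s)))"
    using prob_not_expander_le_sum[OF b nk c hit_le] by simp
  also have "\<dots> \<le> (\<Sum>s=1..min r m. ?q s ^ s)"
    using term_le by (intro sum_mono) simp
  also have "\<dots> \<le> 4 * (K * (real m / real n) * (ln (real n) / real n) powr \<epsilon> + (3/4) powr ln (real n))"
  proof (rule sum_power_self_le)
    show "?q s \<le> 1/2" for s by (rule min.cobounded1)
    fix s :: nat assume "1 \<le> s" "real s \<le> ln (real n)"
    then have "(real s / real n) powr \<epsilon> \<le> (ln (real n) / real n) powr \<epsilon>"
      using n e by (intro powr_mono2 divide_right_mono) auto
    then have "K * (real m / real n) * (real s / real n) powr \<epsilon>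
        \<le> K * (real m / real n) * (ln (real n) / real n) powr \<epsilon>"
      using K0 by (intro mult_left_mono) auto
    then show "?q s \<le> K * (real m / real n) * (ln (real n) / real n) powr \<epsilon>"
      by (rule min.coboundedI2)
  qed (use K0 in auto)
  finally show ?thesis .
qed

lemma prob_expander_ge:
  fixes n m r k :: nat and \<beta> \<epsilon> c K :: real
  assumes b: "\<beta> > 2" and e: "\<epsilon> > 0" and c: "c > 0" and nk: "2 * k \<le> n"
    and rel: "(1 + \<epsilon>) / (1 - 1/(\<beta>-1)) = real k - 1 - c"
    and K: "K = expansion_const (1 - 1/(\<beta>-1)) k \<epsilon>"
    and small: "\<And>s. 1 \<le> s \<Longrightarrow> s \<le> min r m \<Longrightarrow> K * (real m / real n) * (real s / real n) powr \<epsilon> \<le> 1/2"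
  shows "1 - 4 * (K * (real m / real n) * (ln (real n) / real n) powr \<epsilon> + (3/4) powr ln (real n))
    \<le> measure_pmf.prob (random_formula n m k \<beta>) {\<Phi>. bipartite_expander \<Phi> r c}"
proof -
  let ?M = "random_formula n m k \<beta>"
  have "measure_pmf.prob ?M {\<Phi>. bipartite_expander \<Phi> r c}
      = 1 - measure_pmf.prob ?M {\<Phi>. \<not> bipartite_expander \<Phi> r c}"
    using measure_pmf.prob_compl[of "{\<Phi>. \<not> bipartite_expander \<Phi> r c}" ?M]
    by (simp add: set_diff_eq)
  moreover have "measure_pmf.prob ?M {\<Phi>. \<not> bipartite_expander \<Phi> r c}
      \<le> 4 * (K * (real m / real n) * (ln (real n) / real n) powr \<epsilon> + (3/4) powr ln (real n))"
    by (intro prob_not_expander_le[OF b e c nk rel K] small)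
  ultimately show ?thesis by linarith
qed

subsection \<open>Asymptotics\<close>

lemma power_law_exponent_gt_two:
  assumes "k \<ge> 3" "\<beta> > (2 * real k - 3) / (real k - 2)"
  shows "\<beta> > 2"
proof -
  have "(2 * real k - 3) / (real k - 2) = 2 + 1 / (real k - 2)" using assms(1) by (simp add: field_simps)
  moreover have "1 / (real k - 2) > 0" using assms(1) by simp
  ultimately show ?thesis using assms(2) by linarith
qed

lemma nat_floor_scaled_bigtheta:
  fixes f :: "nat \<Rightarrow> real" and \<delta> :: real
  assumes \<delta>: "\<delta> > 0" and f0: "\<And>n. f n \<ge> 0"
    and large: "eventually (\<lambda>n. f n = 0 \<or> 2 / \<delta> \<le> f n) sequentially"
  shows "(\<lambda>n. real (nat \<lfloor>\<delta> * f n\<rfloor>)) \<in> \<Theta>(f)"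
proof -
  have "eventually (\<lambda>n. \<delta>/2 * norm (f n) \<le> norm (real (nat \<lfloor>\<delta> * f n\<rfloor>))
      \<and> norm (real (nat \<lfloor>\<delta> * f n\<rfloor>)) \<le> \<delta> * norm (f n)) sequentially"
    using large
  proof eventually_elim
    case (elim n)
    have "real (nat \<lfloor>\<delta> * f n\<rfloor>) \<le> \<delta> * f n" using f0[of n] \<delta> by simp
    moreover have "f n \<noteq> 0 \<Longrightarrow> \<delta>/2 * f n \<le> real (nat \<lfloor>\<delta> * f n\<rfloor>)"
      using elim \<delta> by (simp add: field_simps) linarith
    ultimately show ?case using f0[of n] by (cases "f n = 0") auto
  qed
  then show ?thesis using \<delta> by (intro bigthetaI'[of "\<delta>/2" \<delta>]) auto
qed

lemma ln_le_scale_eventually: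
  fixes m :: "nat \<Rightarrow> nat" and \<epsilon> :: real
  assumes e: "\<epsilon> > 0"
    and small: "(\<lambda>n. real (m n) / real n) \<in> o(\<lambda>n. real n powr \<epsilon> / ln (real n) powr \<epsilon>)"
  shows "eventually (\<lambda>n. m n = 0 \<or> ln (real n) \<le> real n * (real (m n) / real n) powr (-1/\<epsilon>))
    sequentially"
proof -
  have "eventually (\<lambda>n. norm (real (m n) / real n) \<le> 1 * norm (real n powr \<epsilon> / ln (real n) powr \<epsilon>))
      sequentially"
    using landau_o.smallD[OF small, of 1] by simp
  then have "eventually (\<lambda>n. real (m n) / real n \<le> (real n / ln (real n)) powr \<epsilon>) sequentially"
    by eventually_elim (simp add: powr_divide)
  then show ?thesis using eventually_ge_at_top[of 3]
  proof eventually_elim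
    case (elim n)
    then have n: "real n > 0" "ln (real n) > 0" by auto
    show ?case
    proof (cases "m n = 0")
      case False
      then have "((real n / ln (real n)) powr \<epsilon>) powr (-1/\<epsilon>) \<le> (real (m n) / real n) powr (-1/\<epsilon>)"
        using elim n e by (intro powr_mono2') auto
      also have "((real n / ln (real n)) powr \<epsilon>) powr (-1/\<epsilon>) = ln (real n) / real n"
        using n e by (simp add: powr_powr powr_neg_one)
      finally show ?thesis using n by (simp add: field_simps)
    qed simp
  qed
qed

lemma nat_floor_expansion_scale_bigtheta:
  fixes m :: "nat \<Rightarrow> nat" and \<epsilon> \<delta> :: real
  assumes e: "\<epsilon> > 0" and \<delta>: "\<delta> > 0"
    and small: "(\<lambda>n. real (m n) / real n) \<in> o(\<lambda>n. real n powr \<epsilon> / ln (real n) powr \<epsilon>)"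
  shows "(\<lambda>n. real (nat \<lfloor>\<delta> * (real n * (real (m n) / real n) powr (-1/\<epsilon>))\<rfloor>))
    \<in> \<Theta>(\<lambda>n. real n * (real (m n) / real n) powr (-1/\<epsilon>))"
proof -
  have "eventually (\<lambda>n. ln (real n) \<ge> 2 / \<delta>) sequentially"
    using filterlim_compose[OF ln_at_top filterlim_real_sequentially] by (simp add: filterlim_at_top)
  with ln_le_scale_eventually[OF e small]
  have "eventually (\<lambda>n. real n * (real (m n) / real n) powr (-1/\<epsilon>) = 0
      \<or> 2 / \<delta> \<le> real n * (real (m n) / real n) powr (-1/\<epsilon>)) sequentially"
    by eventually_elim auto
  then show ?thesis using \<delta> by (intro nat_floor_scaled_bigtheta) simp_all
qed

lemma expansion_small_sets:
  fixes K \<epsilon> :: real and n m s :: nat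
  assumes K: "K > 0" and e: "\<epsilon> > 0" and s: "1 \<le> s" "s \<le> m" and n: "n > 0"
    and s_le: "s \<le> nat \<lfloor>(2 * K) powr (-1/\<epsilon>) * (real n * (real m / real n) powr (-1/\<epsilon>))\<rfloor>"
  shows "K * (real m / real n) * (real s / real n) powr \<epsilon> \<le> 1/2"
proof -
  have \<Delta>: "real m / real n > 0" using s n by simp
  have "real s \<le> (2 * K) powr (-1/\<epsilon>) * (real n * (real m / real n) powr (-1/\<epsilon>))"
    using s_le s(1) by linarith
  then have "real s / real n \<le> (2 * K) powr (-1/\<epsilon>) * (real m / real n) powr (-1/\<epsilon>)"
    using n by (simp add: field_simps)
  then have "(real s / real n) powr \<epsilon> \<le> ((2 * K) powr (-1/\<epsilon>) * (real m / real n) powr (-1/\<epsilon>)) powr \<epsilon>"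
    using e by (intro powr_mono2) auto
  also have "\<dots> = 1 / (2 * K) * (1 / (real m / real n))"
    using K \<Delta> e by (simp add: powr_mult powr_powr powr_neg_one)
  finally have "K * (real m / real n) * (real s / real n) powr \<epsilon>
      \<le> K * (real m / real n) * (1 / (2 * K) * (1 / (real m / real n)))"
    using K \<Delta> by (intro mult_left_mono) auto
  also have "\<dots> = 1/2" using K s n by simp
  finally show ?thesis .
qed

lemma failure_bound_tendsto_zero:
  fixes m :: "nat \<Rightarrow> nat" and \<epsilon> K :: real
  assumes small: "(\<lambda>n. real (m n) / real n) \<in> o(\<lambda>n. real n powr \<epsilon> / ln (real n) powr \<epsilon>)"
  shows "(\<lambda>n. 4 * (K * (real (m n) / real n) * (ln (real n) / real n) powr \<epsilon> + (3/4) powr ln (real n)))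
    \<longlonglongrightarrow> 0"
proof -
  have "(\<lambda>n. real (m n) / real n / (real n powr \<epsilon> / ln (real n) powr \<epsilon>)) \<longlonglongrightarrow> 0"
    using smalloD_tendsto[OF small] .
  then have "(\<lambda>n. K * (real (m n) / real n / (real n powr \<epsilon> / ln (real n) powr \<epsilon>))) \<longlonglongrightarrow> 0"
    by (rule tendsto_mult_right_zero)
  moreover have "eventually (\<lambda>n. K * (real (m n) / real n / (real n powr \<epsilon> / ln (real n) powr \<epsilon>))
      = K * (real (m n) / real n) * (ln (real n) / real n) powr \<epsilon>) sequentially"
    using eventually_ge_at_top[of 2] by eventually_elim (simp add: powr_divide)
  ultimately have \<eta>: "(\<lambda>n. K * (real (m n) / real n) * (ln (real n) / real n) powr \<epsilon>) \<longlonglongrightarrow> 0"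
    by (rule Lim_transform_eventually)
  have "(\<lambda>n::nat. real n powr ln (3/4::real)) \<longlonglongrightarrow> 0"
    by (rule tendsto_neg_powr[OF _ filterlim_real_sequentially]) simp
  moreover have "eventually (\<lambda>n. real n powr ln (3/4::real) = (3/4) powr ln (real n)) sequentially"
    using eventually_ge_at_top[of 1] by eventually_elim (simp add: powr_def mult.commute)
  ultimately have "(\<lambda>n::nat. (3/4::real) powr ln (real n)) \<longlonglongrightarrow> 0"
    by (rule Lim_transform_eventually)
  with \<eta> have "(\<lambda>n. K * (real (m n) / real n) * (ln (real n) / real n) powr \<epsilon> + (3/4) powr ln (real n))
      \<longlonglongrightarrow> 0"
    by (rule tendsto_add_zero)
  then show ?thesis by (rule tendsto_mult_right_zero)
qed

theorem mainTheorem4: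
  fixes k :: nat and \<beta> \<epsilon> c :: real and m :: "nat \<Rightarrow> nat"
  assumes hk: "k \<ge> 3"
    and h\<beta>: "\<beta> > (2 * real k - 3) / (real k - 2)"
    and h\<epsilon>: "\<epsilon> > 0"
    and hc: "c = (real k - 1) - (1 + \<epsilon>) * (\<beta> - 1) / (\<beta> - 2)"
    and hcpos: "c > 0"
    and h\<Delta>: "(\<lambda>n. real (m n) / real n) \<in> o(\<lambda>n. real n powr \<epsilon> / (ln (real n)) powr \<epsilon>)"
  shows "\<exists>r :: nat \<Rightarrow> nat.
           (\<lambda>n. real (r n)) \<in> \<Theta>(\<lambda>n. real n * (real (m n) / real n) powr (-1 / \<epsilon>)) \<and>
           (\<lambda>n. measure_pmf.prob (random_formula n (m n) k \<beta>)
                   {\<Phi>. bipartite_expander \<Phi> (r n) c}) \<longlonglongrightarrow> 1"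
proof -
  have b: "\<beta> > 2" using hk h\<beta> by (rule power_law_exponent_gt_two)
  have rel: "(1 + \<epsilon>) / (1 - 1/(\<beta>-1)) = real k - 1 - c" using hc b by (simp add: field_simps)
  define K where "K = expansion_const (1 - 1/(\<beta>-1)) k \<epsilon>"
  have K: "K > 0" unfolding K_def using b hk by (intro expansion_const_pos) (simp_all add: field_simps)
  define r where "r = (\<lambda>n. nat \<lfloor>(2 * K) powr (-1/\<epsilon>) * (real n * (real (m n) / real n) powr (-1/\<epsilon>))\<rfloor>)"
  let ?P = "\<lambda>n. measure_pmf.prob (random_formula n (m n) k \<beta>) {\<Phi>. bipartite_expander \<Phi> (r n) c}"
  let ?B = "\<lambda>n. 4 * (K * (real (m n) / real n) * (ln (real n) / real n) powr \<epsilon> + (3/4) powr ln (real n))"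
  have "eventually (\<lambda>n. 1 - ?B n \<le> ?P n) sequentially"
    using eventually_ge_at_top[of "2 * k"]
  proof eventually_elim
    case (elim n)
    show ?case
    proof (rule prob_expander_ge[OF b h\<epsilon> hcpos elim rel K_def])
      fix s assume "1 \<le> s" "s \<le> min (r n) (m n)"
      then show "K * (real (m n) / real n) * (real s / real n) powr \<epsilon> \<le> 1/2"
        using elim hk unfolding r_def by (intro expansion_small_sets[OF K h\<epsilon>]) simp_all
    qed
  qed
  moreover have "eventually (\<lambda>n. ?P n \<le> 1) sequentially" by simp
  moreover have "(\<lambda>n. 1 - ?B n) \<longlonglongrightarrow> 1"
    using tendsto_diff[OF tendsto_const failure_bound_tendsto_zero[OF h\<Delta>], of 1] by simp
  ultimately have "?P \<longlonglongrightarrow> 1" by (rule tendsto_sandwich[OF _ _ _ tendsto_const])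
  moreover have "(\<lambda>n. real (r n)) \<in> \<Theta>(\<lambda>n. real n * (real (m n) / real n) powr (-1 / \<epsilon>))"
    unfolding r_def using K by (intro nat_floor_expansion_scale_bigtheta[OF h\<epsilon> _ h\<Delta>]) simp
  ultimately show ?thesis by blast
qed

end
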